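(* Let $(\mathcal{D}_i)$ be an infinite family of symmetric designs with parameters $(v_i,k_i,\lambda_i)$ and orders $q_i=k_i-\lambda_i\ge 2$, in which $v_i$ is bounded above by a linear function of $q_i$ (i.e. $v_i=O(q_i)$), and let $\Gamma_i$ be the incidence graph of $\mathcal{D}_i$, with $n_i=2v_i$ vertices. Then $\mu(\Gamma_i)=\Theta(\log n_i)$.
   Context: A symmetric design with parameters $(v,k,\lambda)$ is a pair $(X,\mathcal{B})$ where $X$ is a set of $v$ points and $\mathcal{B}$ is a family of $k$-subsets of $X$ (blocks) such that any two distinct points lie in exactly $\lambda$ blocks and any two distinct blocks meet in exactly $\lambda$ points. Its order is $q=k-\lambda$. Its incidence graph is the bipartite graph on $X\cup\mathcal{B}$ with $x$ adjacent to $B$ iff $x\in B$. A resolving set of a connected graph is a set $S$ of vertices such that for any two distinct vertices $u,w$ some $s\in S$ has $d(u,s)\neq d(w,s)$; the metric dimension $\mu(\Gamma)$ is the minimum size of a resolving set. *)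

theory Defs
  imports Complex_Main "HOL-Library.Landau_Symbols"
begin

definition symmetric_design :: "'a set \<Rightarrow> 'a set set \<Rightarrow> nat \<Rightarrow> nat \<Rightarrow> nat \<Rightarrow> bool" where
  "symmetric_design X B v k l \<longleftrightarrow>
     finite X \<and> card X = v \<and> card B = v \<and>
     (\<forall>b\<in>B. b \<subseteq> X \<and> card b = k) \<and>
     (\<forall>x\<in>X. \<forall>y\<in>X. x \<noteq> y \<longrightarrow> card {b\<in>B. x \<in> b \<and> y \<in> b} = l) \<and>
     (\<forall>b\<in>B. \<forall>c\<in>B. b \<noteq> c \<longrightarrow> card (b \<inter> c) = l)"

fun walk_of_len :: "('v \<Rightarrow> 'v \<Rightarrow> bool) \<Rightarrow> nat \<Rightarrow> 'v \<Rightarrow> 'v \<Rightarrow> bool" where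
  "walk_of_len E 0 u w \<longleftrightarrow> u = w"
| "walk_of_len E (Suc n) u w \<longleftrightarrow> (\<exists>x. E u x \<and> walk_of_len E n x w)"

text \<open>Graph distance (length of a shortest walk); meaningful for connected graphs.\<close>
definition gdist :: "('v \<Rightarrow> 'v \<Rightarrow> bool) \<Rightarrow> 'v \<Rightarrow> 'v \<Rightarrow> nat" where
  "gdist E u w = (LEAST n. walk_of_len E n u w)"

definition resolving_set :: "'v set \<Rightarrow> ('v \<Rightarrow> 'v \<Rightarrow> bool) \<Rightarrow> 'v set \<Rightarrow> bool" where
  "resolving_set V E S \<longleftrightarrow> S \<subseteq> V \<and>
     (\<forall>u\<in>V. \<forall>w\<in>V. u \<noteq> w \<longrightarrow> (\<exists>s\<in>S. gdist E u s \<noteq> gdist E w s))"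

definition metric_dim :: "'v set \<Rightarrow> ('v \<Rightarrow> 'v \<Rightarrow> bool) \<Rightarrow> nat" where
  "metric_dim V E = (LEAST m. \<exists>S. finite S \<and> card S = m \<and> resolving_set V E S)"

definition inc_V :: "'a set \<Rightarrow> 'a set set \<Rightarrow> ('a + 'a set) set" where
  "inc_V X B = Inl ` X \<union> Inr ` B"

fun inc_E :: "'a set \<Rightarrow> 'a set set \<Rightarrow> ('a + 'a set) \<Rightarrow> ('a + 'a set) \<Rightarrow> bool" where
  "inc_E X B (Inl x) (Inr b) \<longleftrightarrow> x \<in> X \<and> b \<in> B \<and> x \<in> b"
| "inc_E X B (Inr b) (Inl x) \<longleftrightarrow> x \<in> X \<and> b \<in> B \<and> x \<in> b"
| "inc_E X B _ _ \<longleftrightarrow> False"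

end

theory Submission
  imports Defs "HOL-Library.FuncSet"
begin

(* The incidence graph of a symmetric design with k >= 2 is bipartite, and since any two points
   share a block and any two blocks share a point, its diameter is at most 3. A resolving set S
   therefore embeds the 2v vertices into {0..3}^S, so 2v <= 4^|S|.
   Conversely, for distinct points x, y exactly q = k - lambda blocks contain x but not y, and for
   distinct blocks b, c the set b - c has q points. A union bound over m-tuples shows that
   m > 2 (v/q) ln v blocks, resp. points, suffice to meet all these sets, and such blocks and
   points together resolve the graph. Hence mu <= 2m = O(log v) when v = O(q). *)

lemma gdist_walk: "walk_of_len E n u w \<Longrightarrow> walk_of_len E (gdist E u w) u w"
  unfolding gdist_def by (rule LeastI)

lemma gdist_le: "walk_of_len E n u w \<Longrightarrow> gdist E u w \<le> n"
  unfolding gdist_def by (rule Least_le)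

lemma gdist_eq_0_iff: "walk_of_len E n u w \<Longrightarrow> gdist E u w = 0 \<longleftrightarrow> u = w"
  using gdist_walk[of E n u w] gdist_le[of E 0 u u] by auto

lemma gdist_eq_1_iff:
  assumes "walk_of_len E n u w" and "u \<noteq> w"
  shows "gdist E u w = 1 \<longleftrightarrow> E u w"
proof
  assume "gdist E u w = 1"
  then show "E u w" using gdist_walk[OF assms(1)] by simp
next
  assume "E u w"
  then have "gdist E u w \<le> 1" using gdist_le[of E 1 u w] by simp
  then show "gdist E u w = 1" using gdist_eq_0_iff[OF assms(1)] assms(2) by linarith
qed

lemma metric_dim_le_card:
  "finite S \<Longrightarrow> resolving_set V E S \<Longrightarrow> metric_dim V E \<le> card S"
  unfolding metric_dim_def by (rule Least_le) blast

lemma metric_dim_attained: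
  assumes "finite S" and "resolving_set V E S"
  obtains S' where "finite S'" "card S' = metric_dim V E" "resolving_set V E S'"
  using LeastI_ex[of "\<lambda>m. \<exists>S. finite S \<and> card S = m \<and> resolving_set V E S"] assms
  unfolding metric_dim_def by blast

lemma metric_dim_empty: "metric_dim {} E = 0"
  using metric_dim_le_card[of "{}" "{}" E] by (simp add: resolving_set_def)

lemma resolving_set_self:
  assumes "\<forall>u\<in>V. \<forall>w\<in>V. \<exists>n. walk_of_len E n u w"
  shows "resolving_set V E V"
  unfolding resolving_set_def
proof (intro conjI ballI impI subset_refl)
  fix u w assume "u \<in> V" "w \<in> V" "u \<noteq> w"
  then have "gdist E u u = 0" "gdist E w u \<noteq> 0"
    using assms gdist_eq_0_iff[of E 0 u u] gdist_eq_0_iff[of E _ w u] by auto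
  with \<open>u \<in> V\<close> show "\<exists>s\<in>V. gdist E u s \<noteq> gdist E w s" by metis
qed

lemma card_le_pow_metric_dim:
  assumes "finite V" and diam: "\<forall>u\<in>V. \<forall>w\<in>V. \<exists>n\<le>d. walk_of_len E n u w"
  shows "card V \<le> Suc d ^ metric_dim V E"
proof -
  have "resolving_set V E V" using diam by (intro resolving_set_self) blast
  with assms(1) obtain S where S: "finite S" "card S = metric_dim V E" "resolving_set V E S"
    by (rule metric_dim_attained)
  define dist_vector where "dist_vector u = restrict (gdist E u) S" for u
  have "inj_on dist_vector V"
  proof (rule inj_onI, rule ccontr)
    fix u w assume "u \<in> V" "w \<in> V" "dist_vector u = dist_vector w" "u \<noteq> w"
    then show False
      using S(3) unfolding resolving_set_def dist_vector_def by (metis restrict_apply')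
  qed
  moreover have "dist_vector ` V \<subseteq> S \<rightarrow>\<^sub>E {..d}"
  proof -
    have "S \<subseteq> V" using S(3) by (simp add: resolving_set_def)
    then have "gdist E u s \<le> d" if "u \<in> V" "s \<in> S" for u s
      using diam that gdist_le[of E _ u s] by (meson le_trans subsetD)
    then show ?thesis by (auto simp: dist_vector_def)
  qed
  ultimately have "card V \<le> card (S \<rightarrow>\<^sub>E {..d})"
    using S(1) by (intro card_inj_on_le) (auto intro: finite_PiE)
  also have "\<dots> = Suc d ^ metric_dim V E" using S(1,2) by (simp add: card_PiE)
  finally show ?thesis .
qed

lemma inc_E_isl: "inc_E X B u w \<Longrightarrow> isl u \<noteq> isl w"
  by (cases u; cases w) auto

lemma walk_of_len_inc_E_parity: "walk_of_len (inc_E X B) n u w \<Longrightarrow> isl u = isl w \<longleftrightarrow> even n"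
proof (induction n arbitrary: u)
  case (Suc n)
  then obtain x where "inc_E X B u x" "walk_of_len (inc_E X B) n x w" by auto
  then show ?case using Suc.IH inc_E_isl by fastforce
qed simp

lemma card_inc_V: "finite X \<Longrightarrow> finite B \<Longrightarrow> card (inc_V X B) = card X + card B"
  unfolding inc_V_def by (subst card_Un_disjoint) (auto simp: card_image)

lemma gdist_neq_if_adjacent:
  assumes "\<exists>n. walk_of_len E n u s" "\<exists>n. walk_of_len E n w s"
    and "E u s" "\<not> E w s" "u \<noteq> s"
  shows "gdist E u s \<noteq> gdist E w s"
proof -
  obtain n n' where walk_u: "walk_of_len E n u s" and walk_w: "walk_of_len E n' w s"
    using assms(1,2) by blast
  have "gdist E u s = 1" using gdist_eq_1_iff[OF walk_u] assms(3,5) by simp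
  moreover have "gdist E w s \<noteq> 1"
    using gdist_eq_1_iff[OF walk_w] gdist_eq_0_iff[OF walk_w] assms(4) by (cases "w = s") auto
  ultimately show ?thesis by simp
qed

lemma even_gdist_inc_E_iff:
  "walk_of_len (inc_E X B) n u w \<Longrightarrow> even (gdist (inc_E X B) u w) \<longleftrightarrow> isl u = isl w"
  using walk_of_len_inc_E_parity[OF gdist_walk] by blast

(* Opposite sides are told apart by the parity of the distance to any landmark,
   two vertices on the same side by adjacency to a separating landmark. *)
lemma resolving_set_incidence:
  assumes conn: "\<forall>u\<in>inc_V X B. \<forall>w\<in>inc_V X B. \<exists>n. walk_of_len (inc_E X B) n u w"
    and "P \<subseteq> X" "T \<subseteq> B" and nonempty: "Inl ` P \<union> Inr ` T \<noteq> {}"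
    and blocks_sep: "\<forall>x\<in>X. \<forall>y\<in>X. x \<noteq> y \<longrightarrow> (\<exists>b\<in>T. x \<in> b \<and> y \<notin> b)"
    and points_sep: "\<forall>b\<in>B. \<forall>c\<in>B. b \<noteq> c \<longrightarrow> (\<exists>z\<in>P. z \<in> b \<and> z \<notin> c)"
  shows "resolving_set (inc_V X B) (inc_E X B) (Inl ` P \<union> Inr ` T)"
proof -
  let ?E = "inc_E X B" and ?S = "Inl ` P \<union> Inr ` T"
  have SV: "?S \<subseteq> inc_V X B" using assms(2,3) by (auto simp: inc_V_def)
  have "\<exists>s\<in>?S. gdist ?E u s \<noteq> gdist ?E w s"
    if u: "u \<in> inc_V X B" and w: "w \<in> inc_V X B" and "u \<noteq> w" for u w
  proof -
    have walks: "\<exists>n. walk_of_len ?E n u s" "\<exists>n. walk_of_len ?E n w s" if "s \<in> ?S" for s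
      using conn u w that SV by blast+
    show ?thesis
    proof (cases "isl u = isl w")
      case False
      obtain s where s: "s \<in> ?S" using nonempty by blast
      then obtain n n' where "walk_of_len ?E n u s" "walk_of_len ?E n' w s" using walks by blast
      then have "even (gdist ?E u s) \<longleftrightarrow> isl u = isl s"
        and "even (gdist ?E w s) \<longleftrightarrow> isl w = isl s"
        by (simp_all add: even_gdist_inc_E_iff)
      then have "even (gdist ?E u s) \<noteq> even (gdist ?E w s)" using False by auto
      then show ?thesis using s by metis
    next
      case True
      then consider (points) x y where "u = Inl x" "w = Inl y" | (blocks) b c where "u = Inr b" "w = Inr c"
        by (cases u; cases w) auto
      then show ?thesis
      proof cases
        case points
        then have "x \<in> X" "y \<in> X" "x \<noteq> y" using u w \<open>u \<noteq> w\<close> by (auto simp: inc_V_def)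
        then obtain b where b: "b \<in> T" "x \<in> b" "y \<notin> b" using blocks_sep by blast
        then have "?E u (Inr b)" "\<not> ?E w (Inr b)" using points \<open>x \<in> X\<close> \<open>T \<subseteq> B\<close> by auto
        moreover have "Inr b \<in> ?S" using b by blast
        ultimately show ?thesis
          using gdist_neq_if_adjacent[OF walks[OF \<open>Inr b \<in> ?S\<close>]] points by auto
      next
        case blocks
        then have "b \<in> B" "c \<in> B" "b \<noteq> c" using u w \<open>u \<noteq> w\<close> by (auto simp: inc_V_def)
        then obtain z where z: "z \<in> P" "z \<in> b" "z \<notin> c" using points_sep by blast
        then have "?E u (Inl z)" "\<not> ?E w (Inl z)" using blocks \<open>b \<in> B\<close> \<open>P \<subseteq> X\<close> by auto
        moreover have "Inl z \<in> ?S" using z by blast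
        ultimately show ?thesis
          using gdist_neq_if_adjacent[OF walks[OF \<open>Inl z \<in> ?S\<close>]] blocks by auto
      qed
    qed
  qed
  with SV show ?thesis by (simp add: resolving_set_def)
qed

(* Union bound: fewer m-tuples over U miss some member of \<A> than there are m-tuples. *)
lemma ex_hitting_set:
  assumes "finite U" "finite \<A>" and large: "\<forall>A\<in>\<A>. A \<subseteq> U \<and> s \<le> card A"
    and union_bound: "card \<A> * (card U - s) ^ m < card U ^ m"
  shows "\<exists>T\<subseteq>U. card T \<le> m \<and> (\<forall>A\<in>\<A>. T \<inter> A \<noteq> {})"
proof -
  define missing where "missing = (\<Union>A\<in>\<A>. {..<m} \<rightarrow>\<^sub>E U - A)"
  have "card missing \<le> (\<Sum>A\<in>\<A>. card ({..<m} \<rightarrow>\<^sub>E U - A))"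
    unfolding missing_def using \<open>finite \<A>\<close> by (rule card_UN_le)
  also have "\<dots> \<le> (\<Sum>A\<in>\<A>. (card U - s) ^ m)"
  proof (intro sum_mono)
    fix A assume "A \<in> \<A>"
    then have "A \<subseteq> U" "s \<le> card A" using large by auto
    then have "card (U - A) \<le> card U - s"
      using \<open>finite U\<close> by (simp add: card_Diff_subset finite_subset)
    then show "card ({..<m} \<rightarrow>\<^sub>E U - A) \<le> (card U - s) ^ m"
      by (simp add: card_PiE power_mono)
  qed
  also have "\<dots> < card ({..<m} \<rightarrow>\<^sub>E U)" using union_bound by (simp add: card_PiE)
  finally have "card missing < card ({..<m} \<rightarrow>\<^sub>E U)" .
  moreover have "finite missing"
    unfolding missing_def using assms(1,2) by (auto intro: finite_PiE)
  ultimately have "\<not> {..<m} \<rightarrow>\<^sub>E U \<subseteq> missing"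
    using card_mono leD by blast
  then obtain f where f: "f \<in> {..<m} \<rightarrow>\<^sub>E U" "f \<notin> missing" by blast
  have "f ` {..<m} \<inter> A \<noteq> {}" if "A \<in> \<A>" for A
    using f that unfolding missing_def by (auto simp: PiE_iff)
  moreover have "f ` {..<m} \<subseteq> U" "card (f ` {..<m}) \<le> m"
    using f(1) card_image_le[of "{..<m}" f] by auto
  ultimately show ?thesis by blast
qed

(* (v - q)^m \<le> v^m exp (-m/C) because q/v \<ge> 1/C, while exp (m/C) > v^2. *)
lemma power_gap_lt:
  fixes v q m :: nat and C :: real
  assumes "0 < q" "q \<le> v" and linear: "real v \<le> C * real q"
    and m: "2 * C * ln (real v) < real m"
  shows "v * v * (v - q) ^ m < v ^ m"
proof -
  have v: "real v > 0" using assms(1,2) by simp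
  have "0 < C * real q" using linear v by linarith
  then have C: "C > 0" using assms(1) by (simp add: zero_less_mult_iff)
  have "real v / C \<le> real q" using linear C by (simp add: pos_divide_le_eq mult.commute)
  then have "real (v - q) \<le> real v * (1 + - 1 / C)"
    using assms(2) by (simp add: of_nat_diff algebra_simps)
  also have "\<dots> \<le> real v * exp (- 1 / C)"
    using v by (intro mult_left_mono exp_ge_add_one_self) auto
  finally have "real (v - q) ^ m \<le> (real v * exp (- 1 / C)) ^ m"
    by (intro power_mono) auto
  also have "\<dots> = real v ^ m * exp (real m * (- 1 / C))"
    by (simp only: power_mult_distrib exp_of_nat_mult)
  also have "exp (real m * (- 1 / C)) = 1 / exp (real m / C)"
    by (simp add: exp_minus inverse_eq_divide)
  finally have gap: "real (v - q) ^ m \<le> real v ^ m / exp (real m / C)" by simp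
  have "real v * real v = exp (2 * ln (real v))"
    using v by (simp only: mult_2 exp_add exp_ln)
  also have "\<dots> < exp (real m / C)"
    using m C by (simp add: pos_less_divide_eq mult_ac)
  finally have vv: "real v * real v < exp (real m / C)" .
  have "real v * real v * real (v - q) ^ m \<le> real v * real v * (real v ^ m / exp (real m / C))"
    using gap by (intro mult_left_mono) auto
  also have "\<dots> = real v ^ m * (real v * real v / exp (real m / C))" by simp
  also have "\<dots> < real v ^ m * 1"
    using vv v by (intro mult_strict_left_mono) auto
  finally have "real (v * v * (v - q) ^ m) < real (v ^ m)" by simp
  then show ?thesis by (simp only: of_nat_less_iff)
qed

lemma affine_ln_le_ln_double:
  fixes x C :: real
  assumes "2 \<le> x" "0 \<le> C"
  shows "C * ln x + 1 \<le> (C + 1) * ln (2 * x)"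
proof -
  have "C * ln x \<le> C * ln (2 * x)" using assms by (intro mult_left_mono) auto
  moreover have "1 \<le> ln (2 * x)"
  proof -
    have "exp 1 \<le> (3::real)" by (rule exp_le)
    also have "\<dots> \<le> 2 * x" using assms(1) by simp
    finally show ?thesis using assms(1) by (simp add: ln_ge_iff)
  qed
  ultimately show ?thesis by (simp add: algebra_simps)
qed

lemma sum_card_filter_swap:
  "finite A \<Longrightarrow> finite B \<Longrightarrow> (\<Sum>x\<in>A. card {y\<in>B. R x y}) = (\<Sum>y\<in>B. card {x\<in>A. R x y})"
  using sum.swap_restrict[of A B "\<lambda>_ _. 1::nat" R] by simp

locale nontrivial_symmetric_design =
  fixes X :: "'a set" and B :: "'a set set" and v k l :: nat
  assumes design: "symmetric_design X B v k l" and block_size_ge_2: "2 \<le> k"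
begin

lemma finite_X: "finite X"
  and card_X: "card X = v"
  and card_B: "card B = v"
  and block_subset: "b \<in> B \<Longrightarrow> b \<subseteq> X"
  and card_block: "b \<in> B \<Longrightarrow> card b = k"
  and card_common_blocks:
    "x \<in> X \<Longrightarrow> y \<in> X \<Longrightarrow> x \<noteq> y \<Longrightarrow> card {b\<in>B. x \<in> b \<and> y \<in> b} = l"
  and card_block_inter: "b \<in> B \<Longrightarrow> c \<in> B \<Longrightarrow> b \<noteq> c \<Longrightarrow> card (b \<inter> c) = l"
  using design unfolding symmetric_design_def by auto

lemma finite_B: "finite B"
  using finite_X block_subset by (meson Pow_iff finite_Pow_iff finite_subset subsetI)

lemma finite_block: "b \<in> B \<Longrightarrow> finite b"
  using finite_X block_subset finite_subset by blast

lemma lambda_pos: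
  assumes "X \<noteq> {}"
  shows "0 < l"
proof -
  have "B \<noteq> {}" using assms finite_X card_X card_B by auto
  then obtain b where b: "b \<in> B" by blast
  then have "1 < card b" using card_block block_size_ge_2 by simp
  then obtain x y where xy: "x \<in> b" "y \<in> b" "x \<noteq> y"
    using card_le_Suc0_iff_eq[of b] finite_block[OF b] by force
  then have "b \<in> {c\<in>B. x \<in> c \<and> y \<in> c}" using b by blast
  then have "0 < card {c\<in>B. x \<in> c \<and> y \<in> c}" using finite_B by (auto simp: card_gt_0_iff)
  moreover have "x \<in> X" "y \<in> X" using xy b block_subset by auto
  ultimately show ?thesis using card_common_blocks \<open>x \<noteq> y\<close> by simp
qed

lemma replication_times:
  assumes "x \<in> X"
  shows "card {b\<in>B. x \<in> b} * (k - 1) = (v - 1) * l"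
proof -
  have "(\<Sum>y\<in>X - {x}. card {b\<in>B. x \<in> b \<and> y \<in> b}) = (\<Sum>y\<in>X - {x}. l)"
    using assms card_common_blocks by (intro sum.cong) auto
  then have "(v - 1) * l = (\<Sum>y\<in>X - {x}. card {b\<in>B. x \<in> b \<and> y \<in> b})"
    using assms finite_X card_X by simp
  also have "\<dots> = (\<Sum>b\<in>B. card {y\<in>X - {x}. x \<in> b \<and> y \<in> b})"
    using finite_X finite_B by (intro sum_card_filter_swap) auto
  also have "\<dots> = (\<Sum>b\<in>B. if x \<in> b then k - 1 else 0)"
  proof (rule sum.cong)
    fix b assume "b \<in> B"
    then have "{y\<in>X - {x}. x \<in> b \<and> y \<in> b} = (if x \<in> b then b - {x} else {})"
      using block_subset by auto
    then show "card {y\<in>X - {x}. x \<in> b \<and> y \<in> b} = (if x \<in> b then k - 1 else 0)"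
      using card_block[OF \<open>b \<in> B\<close>] finite_block[OF \<open>b \<in> B\<close>] by simp
  qed simp
  also have "\<dots> = card {b\<in>B. x \<in> b} * (k - 1)"
    using finite_B by (simp add: sum.If_cases Int_def)
  finally show ?thesis by simp
qed

lemma sum_replication: "(\<Sum>x\<in>X. card {b\<in>B. x \<in> b}) = v * k"
proof -
  have "(\<Sum>x\<in>X. card {b\<in>B. x \<in> b}) = (\<Sum>b\<in>B. card {x\<in>X. x \<in> b})"
    using finite_X finite_B by (rule sum_card_filter_swap)
  also have "\<dots> = (\<Sum>b\<in>B. k)"
    using block_subset card_block by (intro sum.cong) (auto simp: Int_absorb1 Collect_conj_eq)
  finally show ?thesis using card_B by simp
qed

lemma replication:
  assumes "x \<in> X"
  shows "card {b\<in>B. x \<in> b} = k"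
proof -
  have "card {b\<in>B. x \<in> b} = card {b\<in>B. y \<in> b}" if "y \<in> X" for y
  proof -
    have "card {b\<in>B. x \<in> b} * (k - 1) = card {b\<in>B. y \<in> b} * (k - 1)"
      using replication_times[OF assms] replication_times[OF that] by simp
    then show ?thesis using block_size_ge_2 by simp
  qed
  then have "(\<Sum>y\<in>X. card {b\<in>B. y \<in> b}) = (\<Sum>y\<in>X. card {b\<in>B. x \<in> b})"
    by (intro sum.cong) auto
  then have "(\<Sum>y\<in>X. card {b\<in>B. y \<in> b}) = v * card {b\<in>B. x \<in> b}"
    using card_X by simp
  moreover have "0 < v" using assms finite_X card_X card_gt_0_iff by blast
  ultimately show ?thesis using sum_replication by simp
qed

lemma walk_within_side:
  assumes "u \<in> inc_V X B" "w \<in> inc_V X B" "isl u = isl w"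
  shows "\<exists>n\<le>2. walk_of_len (inc_E X B) n u w"
proof (cases "u = w")
  case True
  then show ?thesis by (intro exI[of _ 0]) simp
next
  case False
  from assms consider (points) x y where "x \<in> X" "y \<in> X" "u = Inl x" "w = Inl y"
    | (blocks) b c where "b \<in> B" "c \<in> B" "u = Inr b" "w = Inr c"
    by (cases u; cases w) (auto simp: inc_V_def)
  then have "walk_of_len (inc_E X B) 2 u w"
  proof cases
    case points
    then have "0 < card {b\<in>B. x \<in> b \<and> y \<in> b}"
      using False card_common_blocks lambda_pos by auto
    then obtain b where "b \<in> B" "x \<in> b" "y \<in> b" by (auto simp: card_gt_0_iff)
    then show ?thesis using points by (auto simp: numeral_2_eq_2 intro!: exI[of _ "Inr b"])
  next
    case blocks
    then have "X \<noteq> {}" using card_X card_B finite_B by auto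
    then have "0 < card (b \<inter> c)" using blocks False card_block_inter lambda_pos by auto
    then obtain z where "z \<in> b" "z \<in> c" by (auto simp: card_gt_0_iff)
    moreover have "z \<in> X" using blocks block_subset \<open>z \<in> b\<close> by blast
    ultimately show ?thesis using blocks by (auto simp: numeral_2_eq_2 intro!: exI[of _ "Inl z"])
  qed
  then show ?thesis by (intro exI[of _ 2]) simp
qed

lemma ex_neighbour:
  assumes "u \<in> inc_V X B"
  shows "\<exists>u'. inc_E X B u u'"
proof -
  from assms consider (point) x where "x \<in> X" "u = Inl x" | (block) b where "b \<in> B" "u = Inr b"
    by (auto simp: inc_V_def)
  then show ?thesis
  proof cases
    case point
    then have "card {b\<in>B. x \<in> b} \<noteq> 0" using replication block_size_ge_2 by simp
    then obtain b where "b \<in> B" "x \<in> b" by (metis (no_types, lifting) card.empty empty_Collect_eq)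
    then show ?thesis using point by (intro exI[of _ "Inr b"]) simp
  next
    case block
    then have "b \<noteq> {}" using card_block block_size_ge_2 by force
    then obtain x where "x \<in> b" by blast
    then show ?thesis using block block_subset by (intro exI[of _ "Inl x"]) auto
  qed
qed

lemma incidence_graph_diameter_le_3:
  assumes "u \<in> inc_V X B" "w \<in> inc_V X B"
  shows "\<exists>n\<le>3. walk_of_len (inc_E X B) n u w"
proof (cases "isl u = isl w")
  case True
  then obtain n where "n \<le> 2" "walk_of_len (inc_E X B) n u w"
    using walk_within_side[OF assms] by blast
  then show ?thesis by (intro exI[of _ n]) simp
next
  case False
  obtain u' where u': "inc_E X B u u'" using ex_neighbour[OF assms(1)] by blast
  have "u' \<in> inc_V X B" using u' by (cases u; cases u') (auto simp: inc_V_def)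
  moreover have "isl u' = isl w" using False inc_E_isl[OF u'] by blast
  ultimately obtain n where "n \<le> 2" "walk_of_len (inc_E X B) n u' w"
    using walk_within_side[OF _ assms(2)] by auto
  then have "Suc n \<le> 3" "walk_of_len (inc_E X B) (Suc n) u w" using u' by auto
  then show ?thesis by (intro exI[of _ "Suc n"]) simp
qed

lemma incidence_graph_connected:
  "\<forall>u\<in>inc_V X B. \<forall>w\<in>inc_V X B. \<exists>n. walk_of_len (inc_E X B) n u w"
proof (intro ballI)
  fix u w assume "u \<in> inc_V X B" "w \<in> inc_V X B"
  then obtain n where "walk_of_len (inc_E X B) n u w"
    using incidence_graph_diameter_le_3 by auto
  then show "\<exists>n. walk_of_len (inc_E X B) n u w" by (rule exI)
qed

lemma two_v_le_pow_metric_dim: "2 * v \<le> 4 ^ metric_dim (inc_V X B) (inc_E X B)"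
proof -
  have "card (inc_V X B) = 2 * v"
    using card_inc_V[OF finite_X finite_B] card_X card_B by simp
  moreover have "finite (inc_V X B)" using finite_X finite_B by (simp add: inc_V_def)
  ultimately show ?thesis
    using card_le_pow_metric_dim[of "inc_V X B" 3] incidence_graph_diameter_le_3 by simp
qed

lemma card_point_not_block:
  assumes "x \<in> X" "y \<in> X" "x \<noteq> y"
  shows "card {b\<in>B. x \<in> b \<and> y \<notin> b} = k - l"
proof -
  have "{b\<in>B. x \<in> b \<and> y \<notin> b} = {b\<in>B. x \<in> b} - {b\<in>B. x \<in> b \<and> y \<in> b}" by blast
  moreover have "card ({b\<in>B. x \<in> b} - {b\<in>B. x \<in> b \<and> y \<in> b})
      = card {b\<in>B. x \<in> b} - card {b\<in>B. x \<in> b \<and> y \<in> b}"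
    using finite_B by (intro card_Diff_subset) auto
  ultimately show ?thesis using assms replication card_common_blocks by simp
qed

lemma card_block_diff:
  assumes "b \<in> B" "c \<in> B" "b \<noteq> c"
  shows "card (b - c) = k - l"
  using assms card_block card_block_inter finite_block by (simp add: card_Diff_subset_Int)

lemma card_image_offdiag_le:
  "finite A \<Longrightarrow> card (f ` (A \<times> A - Id)) \<le> card A * card A"
  by (metis Diff_subset card_cartesian_product card_image_le card_mono finite_Diff
      finite_SigmaI le_trans)

lemma ex_blocks_separating_points:
  assumes "v * v * (v - (k - l)) ^ m < v ^ m"
  shows "\<exists>T\<subseteq>B. card T \<le> m \<and>
    (\<forall>x\<in>X. \<forall>y\<in>X. x \<noteq> y \<longrightarrow> (\<exists>b\<in>T. x \<in> b \<and> y \<notin> b))"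
proof -
  define sep where "sep = (\<lambda>(x, y). {b\<in>B. x \<in> b \<and> y \<notin> b})"
  let ?\<A> = "sep ` (X \<times> X - Id)"
  have "\<forall>A\<in>?\<A>. A \<subseteq> B \<and> k - l \<le> card A"
    unfolding sep_def using card_point_not_block by auto
  moreover have "card ?\<A> * (card B - (k - l)) ^ m < card B ^ m"
    using mult_le_mono1[OF card_image_offdiag_le[OF finite_X]] assms card_X card_B
    by (metis le_less_trans)
  ultimately have "\<exists>T\<subseteq>B. card T \<le> m \<and> (\<forall>A\<in>?\<A>. T \<inter> A \<noteq> {})"
    using finite_X by (intro ex_hitting_set[OF finite_B]) auto
  then obtain T where T: "T \<subseteq> B" "card T \<le> m" and hits: "\<forall>A\<in>?\<A>. T \<inter> A \<noteq> {}"
    by auto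
  have "\<exists>b\<in>T. x \<in> b \<and> y \<notin> b" if "x \<in> X" "y \<in> X" "x \<noteq> y" for x y
  proof -
    have "sep (x, y) \<in> ?\<A>" using that by auto
    with hits have "T \<inter> sep (x, y) \<noteq> {}" by (rule bspec)
    then show ?thesis by (auto simp: sep_def)
  qed
  with T show ?thesis by (intro exI[of _ T]) auto
qed

lemma ex_points_separating_blocks:
  assumes "v * v * (v - (k - l)) ^ m < v ^ m"
  shows "\<exists>P\<subseteq>X. card P \<le> m \<and>
    (\<forall>b\<in>B. \<forall>c\<in>B. b \<noteq> c \<longrightarrow> (\<exists>z\<in>P. z \<in> b \<and> z \<notin> c))"
proof -
  let ?\<A> = "(\<lambda>(b, c). b - c) ` (B \<times> B - Id)"
  have "\<forall>A\<in>?\<A>. A \<subseteq> X \<and> k - l \<le> card A"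
  proof
    fix A assume "A \<in> ?\<A>"
    then obtain b c where "b \<in> B" "c \<in> B" "b \<noteq> c" "A = b - c" by auto
    then show "A \<subseteq> X \<and> k - l \<le> card A" using card_block_diff block_subset by auto
  qed
  moreover have "card ?\<A> * (card X - (k - l)) ^ m < card X ^ m"
    using mult_le_mono1[OF card_image_offdiag_le[OF finite_B]] assms card_X card_B
    by (metis le_less_trans)
  ultimately have "\<exists>P\<subseteq>X. card P \<le> m \<and> (\<forall>A\<in>?\<A>. P \<inter> A \<noteq> {})"
    using finite_B by (intro ex_hitting_set[OF finite_X]) auto
  then obtain P where P: "P \<subseteq> X" "card P \<le> m" and hits: "\<forall>A\<in>?\<A>. P \<inter> A \<noteq> {}"
    by auto
  have "\<exists>z\<in>P. z \<in> b \<and> z \<notin> c" if "b \<in> B" "c \<in> B" "b \<noteq> c" for b c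
  proof -
    have "b - c \<in> ?\<A>" using that by (auto intro: image_eqI[of _ _ "(b, c)"])
    with hits have "P \<inter> (b - c) \<noteq> {}" by (rule bspec)
    then show ?thesis by auto
  qed
  with P show ?thesis by (intro exI[of _ P]) auto
qed

lemma block_size_le_v:
  assumes "0 < v"
  shows "k \<le> v"
proof -
  obtain b where "b \<in> B" using assms card_B by fastforce
  then show ?thesis using card_block block_subset finite_X card_X card_mono by metis
qed

lemma metric_dim_le_twice:
  assumes "0 < v" and union_bound: "v * v * (v - (k - l)) ^ m < v ^ m"
  shows "metric_dim (inc_V X B) (inc_E X B) \<le> 2 * m"
proof -
  obtain T where T: "T \<subseteq> B" "card T \<le> m"
    and blocks_sep: "\<forall>x\<in>X. \<forall>y\<in>X. x \<noteq> y \<longrightarrow> (\<exists>b\<in>T. x \<in> b \<and> y \<notin> b)"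
    using ex_blocks_separating_points[OF union_bound] by blast
  obtain P where P: "P \<subseteq> X" "card P \<le> m"
    and points_sep: "\<forall>b\<in>B. \<forall>c\<in>B. b \<noteq> c \<longrightarrow> (\<exists>z\<in>P. z \<in> b \<and> z \<notin> c)"
    using ex_points_separating_blocks[OF union_bound] by blast
  have "T \<noteq> {}"
  proof -
    have "\<not> card X \<le> Suc 0" using block_size_le_v[OF \<open>0 < v\<close>] block_size_ge_2 card_X by simp
    then obtain x y where "x \<in> X" "y \<in> X" "x \<noteq> y"
      using card_le_Suc0_iff_eq[OF finite_X] by blast
    then show ?thesis using blocks_sep by blast
  qed
  have "resolving_set (inc_V X B) (inc_E X B) (Inl ` P \<union> Inr ` T)"
    using \<open>T \<noteq> {}\<close>
    by (intro resolving_set_incidence[OF incidence_graph_connected P(1) T(1) _ blocks_sep points_sep])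
      blast
  moreover have "finite P" "finite T"
    using P(1) T(1) finite_X finite_B finite_subset by auto
  ultimately have "metric_dim (inc_V X B) (inc_E X B) \<le> card (Inl ` P \<union> Inr ` T)"
    by (intro metric_dim_le_card) auto
  also have "\<dots> \<le> card P + card T"
    using card_Un_le card_image_le \<open>finite P\<close> \<open>finite T\<close> by (meson add_mono le_trans)
  finally show ?thesis using P(2) T(2) by linarith
qed

lemma metric_dim_le_ln:
  assumes linear: "real v \<le> C * real (k - l)"
  shows "real (metric_dim (inc_V X B) (inc_E X B)) \<le> (4 * C + 2) * ln (real (2 * v))"
proof (cases "v = 0")
  case True
  then have "X = {}" "B = {}" using card_X card_B finite_X finite_B by auto
  then show ?thesis using True by (simp add: inc_V_def metric_dim_empty)
next
  case False
  then have "k \<le> v" using block_size_le_v by simp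
  then have q_le_v: "k - l \<le> v" by linarith
  have q_pos: "0 < k - l" using False linear by (cases "k - l") auto
  have "C \<ge> 1"
  proof -
    have "real (k - l) \<le> C * real (k - l)" using q_le_v linear by linarith
    then show ?thesis using q_pos by simp
  qed
  define m where "m = nat \<lfloor>2 * C * ln (real v)\<rfloor> + 1"
  have "0 \<le> 2 * C * ln (real v)" using False \<open>C \<ge> 1\<close> by simp
  then have "real m = of_int \<lfloor>2 * C * ln (real v)\<rfloor> + 1" unfolding m_def by simp
  then have m_gt: "2 * C * ln (real v) < real m" and m_le: "real m \<le> 2 * C * ln (real v) + 1"
    by linarith+
  have "metric_dim (inc_V X B) (inc_E X B) \<le> 2 * m"
    using False power_gap_lt[OF q_pos q_le_v linear m_gt] by (intro metric_dim_le_twice) auto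
  then have "real (metric_dim (inc_V X B) (inc_E X B)) \<le> 2 * real m" by simp
  also have "\<dots> \<le> 2 * (2 * C * ln (real v) + 1)" using m_le by simp
  also have "\<dots> \<le> 2 * ((2 * C + 1) * ln (2 * real v))"
    using \<open>k \<le> v\<close> block_size_ge_2 \<open>C \<ge> 1\<close> by (intro mult_left_mono affine_ln_le_ln_double) auto
  finally show ?thesis by (simp add: algebra_simps)
qed

lemma ln_le_metric_dim: "ln (real (2 * v)) \<le> ln 4 * real (metric_dim (inc_V X B) (inc_E X B))"
proof (cases "v = 0")
  case False
  have "real (2 * v) \<le> real (4 ^ metric_dim (inc_V X B) (inc_E X B))"
    using two_v_le_pow_metric_dim by (simp only: of_nat_le_iff)
  then have "real (2 * v) \<le> 4 ^ metric_dim (inc_V X B) (inc_E X B)" by simp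
  then have "ln (real (2 * v)) \<le> ln (4 ^ metric_dim (inc_V X B) (inc_E X B))"
    using False by simp
  then show ?thesis by (simp add: ln_realpow mult.commute)
qed simp

end

theorem corollary2p8:
  fixes X :: "nat \<Rightarrow> 'a set" and B :: "nat \<Rightarrow> 'a set set"
    and v k l :: "nat \<Rightarrow> nat"
  assumes designs: "\<forall>i. symmetric_design (X i) (B i) (v i) (k i) (l i)"
    and order: "\<forall>i. l i \<le> k i \<and> k i - l i \<ge> 2"
    and linear: "(\<lambda>i. real (v i)) \<in> O(\<lambda>i. real (k i - l i))"
  shows "(\<lambda>i. real (metric_dim (inc_V (X i) (B i)) (inc_E (X i) (B i))))
           \<in> \<Theta>(\<lambda>i. ln (real (2 * v i)))"
proof -
  obtain C where "C > 0" and ev_linear: "eventually (\<lambda>i. real (v i) \<le> C * real (k i - l i)) at_top"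
    using linear by (elim landau_o.bigE) simp
  show ?thesis
  proof (rule bigthetaI')
    show "1 / ln 4 > (0::real)" "4 * C + 2 > 0" using \<open>C > 0\<close> by simp_all
    show "eventually (\<lambda>i. 1 / ln 4 * norm (ln (real (2 * v i)))
        \<le> norm (real (metric_dim (inc_V (X i) (B i)) (inc_E (X i) (B i))))
      \<and> norm (real (metric_dim (inc_V (X i) (B i)) (inc_E (X i) (B i))))
        \<le> (4 * C + 2) * norm (ln (real (2 * v i)))) at_top"
      using ev_linear
    proof eventually_elim
      case (elim i)
      interpret nontrivial_symmetric_design "X i" "B i" "v i" "k i" "l i"
        using designs spec[OF order, of i] by unfold_locales auto
      have "0 \<le> ln (real (2 * v i))" by (cases "v i = 0") auto
      then show ?case
        using ln_le_metric_dim metric_dim_le_ln[OF elim] by (simp add: field_simps)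
    qed
  qed
qed

end
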